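(* Let $D_+, D_-$ be a pair of SBP operators of order $q\ge1$ on $[a,b]$ with associated data $H,S,\mathbf{p}_0,\mathbf{p}_n,\mathbf{x}$, and assume it is nullspace consistent, i.e. $\ker D_+=\operatorname{span}\{\mathbf{1}\}$. Let $\tilde D_+ = D_+ + H^{-1}\mathbf{p}_0\mathbf{p}_0^\top$ and let $(\lambda,\mathbf{w})$ be an eigenpair of $\tilde D_+$ (over $\mathbb{C}$) with $\operatorname{Re}(\lambda)=0$. Then $(\mathbf{x}^j)^\top H\mathbf{w} = 0$ for every $j=0,\dots,q$.
   Context: Let $[a,b]$ be an interval with $b>a$ and $n\ge 1$. For $\mathbf{x}\in\mathbb{R}^{n+1}$, $\mathbf{x}^j$ denotes elementwise exponentiation, with $\mathbf{x}^0=\mathbf{1}=(1,\dots,1)^\top$. Matrices $D_+, D_-\in\mathbb{R}^{(n+1)\times(n+1)}$ form a pair of SBP (summation-by-parts) operators of order $q\ge 1$ on $[a,b]$ if there exist matrices $H,S\in\mathbb{R}^{(n+1)\times(n+1)}$ and vectors $\mathbf{p}_0,\mathbf{p}_n,\mathbf{x}\in\mathbb{R}^{n+1}$ such that: (A) $D_\pm \mathbf{x}^j = j\mathbf{x}^{j-1}$, $\mathbf{p}_0^\top\mathbf{x}^j = a^j$, $\mathbf{p}_n^\top \mathbf{x}^j = b^j$ for $j=0,\dots,q$ (with $0\cdot\mathbf{x}^{-1}:=\mathbf{0}$); (B) $H=H^\top$ is positive definite; (C) $HD_+ + D_+^\top H = -\mathbf{p}_0\mathbf{p}_0^\top + \mathbf{p}_n\mathbf{p}_n^\top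 + S$ with $S=S^\top$ positive semidefinite; (D) $HD_+ + D_-^\top H = -\mathbf{p}_0\mathbf{p}_0^\top + \mathbf{p}_n\mathbf{p}_n^\top$; (E) $\mathbf{x}=(x_0,\dots,x_n)^\top$ with $x_i\ne x_j$ for $i\ne j$. *)

theory Defs
  imports "HOL-Analysis.Analysis"
begin

text \<open>Vectors in R^(n+1) are modelled as real^'n with CARD('n) = n+1.\<close>

definition epow :: "real^'n \<Rightarrow> nat \<Rightarrow> real^'n" where
  "epow x j = (\<chi> i. (x $ i) ^ j)"

definition outer :: "real^'n \<Rightarrow> real^'n \<Rightarrow> real^'n^'n" where
  "outer u v = (\<chi> i k. u $ i * v $ k)"

definition pos_def_mat :: "real^'n^'n \<Rightarrow> bool" where
  "pos_def_mat H \<longleftrightarrow> transpose H = H \<and> (\<forall>v. v \<noteq> 0 \<longrightarrow> v \<bullet> (H *v v) > 0)"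

definition psd_mat :: "real^'n^'n \<Rightarrow> bool" where
  "psd_mat S \<longleftrightarrow> transpose S = S \<and> (\<forall>v. v \<bullet> (S *v v) \<ge> 0)"

text \<open>SBP pair of order q on [a,b], conditions (A)-(E).\<close>
definition sbp_pair ::
  "real \<Rightarrow> real \<Rightarrow> nat \<Rightarrow> real^'n^'n \<Rightarrow> real^'n^'n \<Rightarrow> real^'n^'n \<Rightarrow> real^'n^'n
   \<Rightarrow> real^'n \<Rightarrow> real^'n \<Rightarrow> real^'n \<Rightarrow> bool" where
  "sbp_pair a b q Dp Dm H S p0 pn x \<longleftrightarrow>
     (\<forall>j\<le>q. Dp *v epow x j = of_nat j *\<^sub>R epow x (j - 1)
            \<and> Dm *v epow x j = of_nat j *\<^sub>R epow x (j - 1)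
            \<and> p0 \<bullet> epow x j = a ^ j \<and> pn \<bullet> epow x j = b ^ j)
   \<and> pos_def_mat H
   \<and> psd_mat S
   \<and> H ** Dp + transpose Dp ** H = - outer p0 p0 + outer pn pn + S
   \<and> H ** Dp + transpose Dm ** H = - outer p0 p0 + outer pn pn
   \<and> inj (\<lambda>i. x $ i)"

definition cmat :: "real^'n^'m \<Rightarrow> complex^'n^'m" where
  "cmat M = (\<chi> i k. complex_of_real (M $ i $ k))"

end

theory Submission
  imports Defs
begin

text \<open>Write \<open>w = u + i v\<close> and \<open>\<lambda> = i \<mu>\<close>, so that \<open>\<tilde>D\<^sub>+\<close> rotates \<open>(u, v)\<close>:
  \<open>\<tilde>D\<^sub>+ u = -\<mu> v\<close>, \<open>\<tilde>D\<^sub>+ v = \<mu> u\<close>. Condition (C) gives the energy identity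
  \<open>2 z\<^sup>T H \<tilde>D\<^sub>+ z = (p\<^sub>0\<^sup>T z)\<^sup>2 + (p\<^sub>n\<^sup>T z)\<^sup>2 + z\<^sup>T S z\<close>, and for a rotation the two left-hand
  sides cancel, so all boundary values of \<open>u\<close> and \<open>v\<close> vanish and \<open>D\<^sub>+\<close> itself rotates \<open>(u, v)\<close>.
  Condition (D) then lets \<open>D\<^sub>+\<close> be moved onto \<open>x\<^sup>j\<close> as \<open>-D\<^sub>-\<close>, which yields the coupled
  recurrence \<open>\<mu> d\<^sub>j = j c\<^sub>j\<^sub>-\<^sub>1\<close>, \<open>\<mu> c\<^sub>j = -j d\<^sub>j\<^sub>-\<^sub>1\<close> for the moments \<open>c\<^sub>j = (x\<^sup>j)\<^sup>T H u\<close>,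
  \<open>d\<^sub>j = (x\<^sup>j)\<^sup>T H v\<close>. Nullspace consistency forces \<open>\<mu> \<noteq> 0\<close>, and the recurrence kills all
  moments up to order \<open>q\<close>.\<close>

definition vec_Re :: "complex^'n \<Rightarrow> real^'n" where
  "vec_Re w = (\<chi> i. Re (w $ i))"

definition vec_Im :: "complex^'n \<Rightarrow> real^'n" where
  "vec_Im w = (\<chi> i. Im (w $ i))"

lemma vec_Re_Im_eq_0_iff: "vec_Re w = 0 \<and> vec_Im w = 0 \<longleftrightarrow> w = 0"
  by (auto simp: vec_eq_iff vec_Re_def vec_Im_def complex_eq_iff)

lemma Re_cmat_mult: "Re ((cmat A *v w) $ i) = (A *v vec_Re w) $ i"
  by (simp add: cmat_def matrix_vector_mult_def vec_Re_def Re_sum)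

lemma Im_cmat_mult: "Im ((cmat A *v w) $ i) = (A *v vec_Im w) $ i"
  by (simp add: cmat_def matrix_vector_mult_def vec_Im_def Im_sum)

lemma cmat_mult_eigen_Re_Im:
  assumes "cmat M *v w = lam *s w" and "Re lam = 0"
  shows "M *v vec_Re w = (- Im lam) *\<^sub>R vec_Im w"
    and "M *v vec_Im w = Im lam *\<^sub>R vec_Re w"
proof -
  have "(M *v vec_Re w) $ i = Re (lam * w $ i)" "(M *v vec_Im w) $ i = Im (lam * w $ i)" for i
    by (simp_all add: assms(1) flip: Re_cmat_mult Im_cmat_mult)
  then show "M *v vec_Re w = (- Im lam) *\<^sub>R vec_Im w" "M *v vec_Im w = Im lam *\<^sub>R vec_Re w"
    using assms(2) by (simp_all add: vec_eq_iff vec_Re_def vec_Im_def)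
qed

lemma outer_mult_vector: "outer u v *v z = (v \<bullet> z) *\<^sub>R u"
  by (simp add: vec_eq_iff outer_def matrix_vector_mult_def inner_vec_def sum_distrib_left
      sum_distrib_right mult_ac)

lemma matrix_vector_mult_uminus_right: "A *v (- x) = - (A *v (x :: 'a::comm_ring_1^'n))"
  by (simp add: vec_eq_iff matrix_vector_mult_def sum_negf)

lemma inner_transpose_mult: "y \<bullet> (transpose A *v z) = (A *v y) \<bullet> (z :: real^'n)"
  by (metis dot_lmul_matrix inner_commute transpose_matrix_vector)

lemma inner_symmetric_mult:
  assumes "transpose H = H"
  shows "y \<bullet> (H *v z) = z \<bullet> (H *v (y :: real^'n))"
  by (metis assms inner_commute inner_transpose_mult)

lemma pos_def_mat_mult_matrix_inv:
  assumes "pos_def_mat H"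
  shows "H ** matrix_inv H = mat 1"
proof -
  have "H *v z = 0 \<Longrightarrow> z = 0" for z
    using assms by (metis pos_def_mat_def inner_zero_right less_irrefl)
  then have "invertible H"
    by (metis matrix_left_invertible_ker invertible_left_inverse)
  then show ?thesis
    unfolding invertible_def matrix_inv_def by (rule someI_ex[THEN conjunct1])
qed

text \<open>The penalty term \<open>H\<^sup>-\<^sup>1 p\<^sub>0 p\<^sub>0\<^sup>T\<close> flips the sign of the inflow boundary term in (C).\<close>

lemma sbp_pair_penalized_energy:
  assumes "sbp_pair a b q Dp Dm H S p0 pn x"
  shows "2 * (z \<bullet> (H *v ((Dp + matrix_inv H ** outer p0 p0) *v z)))
           = (p0 \<bullet> z)\<^sup>2 + (pn \<bullet> z)\<^sup>2 + z \<bullet> (S *v z)"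
proof -
  have H: "pos_def_mat H"
    and C: "H ** Dp + transpose Dp ** H = - outer p0 p0 + outer pn pn + S"
    using assms by (simp_all add: sbp_pair_def)
  have "z \<bullet> ((H ** Dp + transpose Dp ** H) *v z) = 2 * (z \<bullet> (H *v (Dp *v z)))"
    using inner_symmetric_mult[of H "Dp *v z" z] H
    by (simp add: pos_def_mat_def matrix_vector_mult_add_rdistrib inner_add_right
        inner_transpose_mult del: transpose_matrix_vector flip: matrix_vector_mul_assoc)
  moreover have "z \<bullet> ((- outer p0 p0 + outer pn pn + S) *v z)
                   = (pn \<bullet> z)\<^sup>2 - (p0 \<bullet> z)\<^sup>2 + z \<bullet> (S *v z)"
    by (simp add: matrix_vector_mult_add_rdistrib outer_mult_vector inner_add_right
        matrix_vector_mult_diff_rdistrib inner_diff_right power2_eq_square inner_commute)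
  moreover have "H *v (matrix_inv H *v y) = y" for y
    by (simp add: matrix_vector_mul_assoc pos_def_mat_mult_matrix_inv[OF H])
  then have "H *v ((matrix_inv H ** outer p0 p0) *v z) = (p0 \<bullet> z) *\<^sub>R p0"
    by (simp add: outer_mult_vector flip: matrix_vector_mul_assoc)
  ultimately show ?thesis
    using C by (simp add: matrix_vector_mult_add_rdistrib inner_add_right power2_eq_square
        inner_commute algebra_simps)
qed

lemma sbp_pair_rotation_boundary_zero:
  fixes u v :: "real^'n"
  assumes sbp: "sbp_pair a b q Dp Dm H S p0 pn x"
    and Mu: "(Dp + matrix_inv H ** outer p0 p0) *v u = (- \<mu>) *\<^sub>R v"
    and Mv: "(Dp + matrix_inv H ** outer p0 p0) *v v = \<mu> *\<^sub>R u"
  shows "p0 \<bullet> u = 0" and "p0 \<bullet> v = 0" and "pn \<bullet> u = 0" and "pn \<bullet> v = 0"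
proof -
  have "transpose H = H" and S: "\<And>z. z \<bullet> (S *v z) \<ge> 0"
    using sbp by (simp_all add: sbp_pair_def pos_def_mat_def psd_mat_def)
  then have "u \<bullet> (H *v ((- \<mu>) *\<^sub>R v)) + v \<bullet> (H *v (\<mu> *\<^sub>R u)) = 0"
    using inner_symmetric_mult[of H u v]
    by (simp only: matrix_vector_mult_scaleR inner_scaleR_right)
  then have "((p0 \<bullet> u)\<^sup>2 + (pn \<bullet> u)\<^sup>2 + u \<bullet> (S *v u))
               + ((p0 \<bullet> v)\<^sup>2 + (pn \<bullet> v)\<^sup>2 + v \<bullet> (S *v v)) = 0"
    using sbp_pair_penalized_energy[OF sbp, of u] sbp_pair_penalized_energy[OF sbp, of v]
    unfolding Mu Mv by linarith
  then have "(p0 \<bullet> u)\<^sup>2 = 0 \<and> (p0 \<bullet> v)\<^sup>2 = 0 \<and> (pn \<bullet> u)\<^sup>2 = 0 \<and> (pn \<bullet> v)\<^sup>2 = 0"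
    using S[of u] S[of v] zero_le_power2[of "p0 \<bullet> u"] zero_le_power2[of "pn \<bullet> u"]
      zero_le_power2[of "p0 \<bullet> v"] zero_le_power2[of "pn \<bullet> v"] by linarith
  then show "p0 \<bullet> u = 0" and "p0 \<bullet> v = 0" and "pn \<bullet> u = 0" and "pn \<bullet> v = 0"
    by simp_all
qed

lemma sbp_pair_summation_by_parts:
  assumes "sbp_pair a b q Dp Dm H S p0 pn x" and "p0 \<bullet> z = 0" and "pn \<bullet> z = 0"
  shows "y \<bullet> (H *v (Dp *v z)) = - ((Dm *v y) \<bullet> (H *v z))"
proof -
  have "H ** Dp + transpose Dm ** H = - outer p0 p0 + outer pn pn"
    using assms(1) by (simp add: sbp_pair_def)
  then have "y \<bullet> ((H ** Dp + transpose Dm ** H) *v z) = 0"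
    using assms(2,3) by (simp add: matrix_vector_mult_diff_rdistrib outer_mult_vector)
  then show ?thesis
    by (simp add: matrix_vector_mult_add_rdistrib inner_add_right inner_transpose_mult
        del: transpose_matrix_vector flip: matrix_vector_mul_assoc)
qed

lemma coupled_recurrence_eq_0:
  fixes c d :: "nat \<Rightarrow> real"
  assumes "\<mu> \<noteq> 0"
    and "\<And>j. j \<le> q \<Longrightarrow> \<mu> * d j = of_nat j * c (j - 1)"
    and "\<And>j. j \<le> q \<Longrightarrow> \<mu> * c j = - (of_nat j * d (j - 1))"
  shows "j \<le> q \<Longrightarrow> c j = 0 \<and> d j = 0"
proof (induction j)
  case 0
  then show ?case using assms(2,3)[of 0] assms(1) by simp
next
  case (Suc j)
  then show ?case using assms(2,3)[of "Suc j"] assms(1) by simp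
qed

lemma sbp_pair_moments_eq_0:
  fixes u v :: "real^'n"
  assumes sbp: "sbp_pair a b q Dp Dm H S p0 pn x" and "\<mu> \<noteq> 0"
    and "p0 \<bullet> u = 0" and "p0 \<bullet> v = 0" and "pn \<bullet> u = 0" and "pn \<bullet> v = 0"
    and Du: "Dp *v u = (- \<mu>) *\<^sub>R v" and Dv: "Dp *v v = \<mu> *\<^sub>R u"
    and "j \<le> q"
  shows "epow x j \<bullet> (H *v u) = 0 \<and> epow x j \<bullet> (H *v v) = 0"
proof (rule coupled_recurrence_eq_0[where c = "\<lambda>j. epow x j \<bullet> (H *v u)", OF \<open>\<mu> \<noteq> 0\<close> _ _ \<open>j \<le> q\<close>])
  fix j assume "j \<le> q"
  then have Dm: "Dm *v epow x j = of_nat j *\<^sub>R epow x (j - 1)"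
    using sbp by (simp add: sbp_pair_def)
  show "\<mu> * (epow x j \<bullet> (H *v v)) = of_nat j * (epow x (j - 1) \<bullet> (H *v u))"
    using sbp_pair_summation_by_parts[OF sbp, of u "epow x j"] assms(3,5) Du Dm
    by (simp add: matrix_vector_mult_scaleR matrix_vector_mult_uminus_right)
  show "\<mu> * (epow x j \<bullet> (H *v u)) = - (of_nat j * (epow x (j - 1) \<bullet> (H *v v)))"
    using sbp_pair_summation_by_parts[OF sbp, of v "epow x j"] assms(4,6) Dv Dm
    by (simp add: matrix_vector_mult_scaleR)
qed

lemma sbp_pair_null_boundary_eq_0:
  assumes "sbp_pair a b q Dp Dm H S p0 pn x" and "{v. Dp *v v = 0} = span {1 :: real^'n}"
    and "Dp *v u = 0" and "p0 \<bullet> u = 0"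
  shows "u = 0"
proof -
  obtain \<alpha> where u: "u = \<alpha> *\<^sub>R 1"
    using assms(2,3) by (auto simp: span_singleton)
  have "epow x 0 = 1"
    by (simp add: epow_def vec_eq_iff)
  then have "p0 \<bullet> 1 = 1"
    using assms(1) unfolding sbp_pair_def by (metis le0 power_0)
  then show ?thesis
    using assms(4) u by simp
qed

theorem lemma4:
  fixes a b :: real and q :: nat
    and Dp Dm H S :: "real^'n^'n" and p0 pn x :: "real^'n"
    and lam :: complex and w :: "complex^'n"
  assumes "CARD('n) \<ge> 2" and "b > a" and "q \<ge> 1"
    and "sbp_pair a b q Dp Dm H S p0 pn x"
    and "{v. Dp *v v = 0} = span {1 :: real^'n}"
    and "w \<noteq> 0"
    and "cmat (Dp + matrix_inv H ** outer p0 p0) *v w = lam *s w"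
    and "Re lam = 0"
  shows "\<forall>j\<le>q. (\<Sum>i\<in>UNIV. complex_of_real (x $ i ^ j) * (cmat H *v w) $ i) = 0"
proof (intro allI impI)
  fix j assume "j \<le> q"
  define u v \<mu> where "u = vec_Re w" and "v = vec_Im w" and "\<mu> = Im lam"
  note rot = cmat_mult_eigen_Re_Im[OF assms(7,8), folded u_def v_def \<mu>_def]
  note bdry = sbp_pair_rotation_boundary_zero[OF assms(4) rot]
  have Du: "Dp *v u = (- \<mu>) *\<^sub>R v" and Dv: "Dp *v v = \<mu> *\<^sub>R u"
    using rot bdry by (simp_all add: matrix_vector_mult_add_rdistrib outer_mult_vector
        flip: matrix_vector_mul_assoc)
  have "\<mu> \<noteq> 0"
  proof
    assume "\<mu> = 0"
    then have "u = 0" and "v = 0"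
      using sbp_pair_null_boundary_eq_0[OF assms(4,5)] Du Dv bdry by simp_all
    then show False
      using assms(6) vec_Re_Im_eq_0_iff by (auto simp: u_def v_def)
  qed
  then have "epow x j \<bullet> (H *v u) = 0 \<and> epow x j \<bullet> (H *v v) = 0"
    using sbp_pair_moments_eq_0[OF assms(4) _ bdry Du Dv \<open>j \<le> q\<close>] by blast
  then show "(\<Sum>i\<in>UNIV. complex_of_real (x $ i ^ j) * (cmat H *v w) $ i) = 0"
    by (simp add: complex_eq_iff Re_sum Im_sum Re_cmat_mult Im_cmat_mult epow_def inner_vec_def
        u_def v_def mult.commute)
qed

end
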